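(* Let $G$ be an infinite finitely generated residually finite group, $S$ a finite symmetric generating set, and $(X_n)_{n\ge0}$ the lazy random walk on $\mathrm{Cay}(G,S)$. Then $$\liminf_{n\to\infty}\mathbb{E}[D_G(X_n)]\ge 2+\sum_{k\ge2}\frac{1}{[G:\Lambda_k]}.$$
   Context: For $g\ne e$, $D_G(g)=\min\{[G:N]: N\lhd G\text{ of finite index},\ g\notin N\}$, and $D_G(e)=0$. For $k\ge2$, $\Lambda_k$ is the intersection of all normal subgroups of $G$ of index at most $k$; $\Lambda_0=\Lambda_1=G$. The lazy random walk on $\mathrm{Cay}(G,S)$ is the Markov chain with $X_0=e$ and transition matrix $\frac12 I+\frac12P$, where $P(x,y)=\frac1{|S|}\#\{s\in S:y=xs\}$. *)

theory Defs
  imports "HOL-Algebra.Algebra" "HOL-Probability.Probability"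
begin

text \<open>Index of a subgroup: number of right cosets (0 if infinitely many).\<close>
definition grp_index :: "('a, 'b) monoid_scheme \<Rightarrow> 'a set \<Rightarrow> nat" where
  "grp_index G N = card (rcosets\<^bsub>G\<^esub> N)"

definition fin_normal :: "('a, 'b) monoid_scheme \<Rightarrow> 'a set \<Rightarrow> bool" where
  "fin_normal G N \<longleftrightarrow> N \<lhd> G \<and> finite (rcosets\<^bsub>G\<^esub> N)"

definition D_G :: "('a, 'b) monoid_scheme \<Rightarrow> 'a \<Rightarrow> nat" where
  "D_G G g = (if g = \<one>\<^bsub>G\<^esub> then 0
      else Inf {grp_index G N | N. fin_normal G N \<and> g \<notin> N})"

definition Lambda :: "('a, 'b) monoid_scheme \<Rightarrow> nat \<Rightarrow> 'a set" where
  "Lambda G k = carrier G \<inter> \<Inter> {N. fin_normal G N \<and> grp_index G N \<le> k}"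

definition residually_finite :: "('a, 'b) monoid_scheme \<Rightarrow> bool" where
  "residually_finite G \<longleftrightarrow>
     (\<forall>g \<in> carrier G. g \<noteq> \<one>\<^bsub>G\<^esub> \<longrightarrow> (\<exists>N. fin_normal G N \<and> g \<notin> N))"

definition finitely_generated :: "('a, 'b) monoid_scheme \<Rightarrow> bool" where
  "finitely_generated G \<longleftrightarrow>
     (\<exists>A. finite A \<and> A \<subseteq> carrier G \<and> generate G A = carrier G)"

definition lazy_step :: "('a, 'b) monoid_scheme \<Rightarrow> 'a set \<Rightarrow> 'a \<Rightarrow> 'a pmf" where
  "lazy_step G S x = bind_pmf (bernoulli_pmf (1/2))
     (\<lambda>b. if b then return_pmf x else map_pmf (\<lambda>s. x \<otimes>\<^bsub>G\<^esub> s) (pmf_of_set S))"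

primrec lazy_walk :: "('a, 'b) monoid_scheme \<Rightarrow> 'a set \<Rightarrow> nat \<Rightarrow> 'a pmf" where
  "lazy_walk G S 0 = return_pmf \<one>\<^bsub>G\<^esub>"
| "lazy_walk G S (Suc n) = bind_pmf (lazy_walk G S n) (lazy_step G S)"

end

theory Submission
  imports Defs "HOL-Library.Groups_Big_Fun"
begin

text \<open>A nontrivial element x of \<open>Lambda G k\<close> has \<open>D_G G x > k\<close>, so D_G(x) is at least
  the number of k < K with x \<in> \<open>Lambda G k\<close>, minus K if x = \<one>; hence E[D_G(X_n)] is at least
  the sum over k < K of P(X_n \<in> \<open>Lambda G k\<close>) - P(X_n = \<one>).
  For every subgroup H, P(X_n \<in> H) tends to 1/[G:H] (to 0 if the index is infinite):
  since S is symmetric, the masses of the right cosets of H evolve by lazy averaging over the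
  translations C \<mapsto> C s, s \<in> S; each such step lowers the l2-energy of the coset masses by a
  multiple of their Dirichlet form, so the Dirichlet forms are summable and the mass difference
  between C and C s tends to 0. As S generates G, all cosets end up with asymptotically equal
  mass. For H = {\<one>} in the infinite group G this gives P(X_n = \<one>) \<rightarrow> 0, and
  \<open>Lambda G 0 = Lambda G 1 = carrier G\<close> contribute the summand 2.\<close>

definition lazy_average :: "'s set \<Rightarrow> ('s \<Rightarrow> 'v \<Rightarrow> 'v) \<Rightarrow> ('v \<Rightarrow> real) \<Rightarrow> 'v \<Rightarrow> real" where
  "lazy_average S \<sigma> a v = a v / 2 + (\<Sum>s\<in>S. a (\<sigma> s v)) / (2 * real (card S))"

lemma sum_squares_average_le:
  fixes a :: "'v \<Rightarrow> real" and \<sigma> :: "'s \<Rightarrow> 'v \<Rightarrow> 'v"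
  assumes S: "finite S" "S \<noteq> {}"
    and invariant: "\<And>s. s \<in> S \<Longrightarrow> (\<Sum>v\<in>W. (a (\<sigma> s v))\<^sup>2) = (\<Sum>v\<in>W. (a v)\<^sup>2)"
  shows "(\<Sum>v\<in>W. ((\<Sum>s\<in>S. a (\<sigma> s v)) / real (card S))\<^sup>2) \<le> (\<Sum>v\<in>W. (a v)\<^sup>2)"
proof -
  define k where "k = real (card S)"
  have k: "k > 0"
    using S by (simp add: k_def card_gt_0_iff)
  have "(\<Sum>v\<in>W. ((\<Sum>s\<in>S. a (\<sigma> s v)) / k)\<^sup>2) \<le> (\<Sum>v\<in>W. (\<Sum>s\<in>S. (a (\<sigma> s v))\<^sup>2) / k)"
  proof (rule sum_mono)
    fix v
    have "(\<Sum>s\<in>S. a (\<sigma> s v))\<^sup>2 \<le> (\<Sum>s\<in>S. (a (\<sigma> s v))\<^sup>2) * k"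
      unfolding k_def by (rule sum_squared_le_sum_of_squares)
    then show "((\<Sum>s\<in>S. a (\<sigma> s v)) / k)\<^sup>2 \<le> (\<Sum>s\<in>S. (a (\<sigma> s v))\<^sup>2) / k"
      using k by (simp add: field_simps power2_eq_square)
  qed
  also have "\<dots> = (\<Sum>s\<in>S. \<Sum>v\<in>W. (a (\<sigma> s v))\<^sup>2) / k"
    by (simp add: sum_divide_distrib[symmetric] sum.swap[of _ W])
  also have "\<dots> = (\<Sum>v\<in>W. (a v)\<^sup>2)"
    using invariant k by (simp add: k_def)
  finally show ?thesis
    by (simp add: k_def)
qed

lemma sum_squares_lazy_average_le:
  fixes a :: "'v \<Rightarrow> real" and \<sigma> :: "'s \<Rightarrow> 'v \<Rightarrow> 'v"
  assumes S: "finite S" "S \<noteq> {}"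
    and invariant: "\<And>s. s \<in> S \<Longrightarrow> (\<Sum>v\<in>W. (a (\<sigma> s v))\<^sup>2) = (\<Sum>v\<in>W. (a v)\<^sup>2)"
  shows "(\<Sum>v\<in>W. (lazy_average S \<sigma> a v)\<^sup>2)
    \<le> (\<Sum>v\<in>W. (a v)\<^sup>2) - (\<Sum>s\<in>S. \<Sum>v\<in>W. (a v - a (\<sigma> s v))\<^sup>2) / (4 * real (card S))"
proof -
  define k where "k = real (card S)"
  have k: "k > 0"
    using S by (simp add: k_def card_gt_0_iff)
  define P where "P v = (\<Sum>s\<in>S. a (\<sigma> s v)) / k" for v
  define A where "A = (\<Sum>v\<in>W. (a v)\<^sup>2)"
  define C where "C = (\<Sum>v\<in>W. a v * P v)"
  have average: "lazy_average S \<sigma> a v = (a v + P v) / 2" for v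
    by (simp add: lazy_average_def P_def k_def add_divide_distrib)
  have squares_P: "(\<Sum>v\<in>W. (P v)\<^sup>2) \<le> A"
    unfolding P_def A_def k_def using S invariant by (rule sum_squares_average_le)
  have "(\<Sum>s\<in>S. \<Sum>v\<in>W. (a v - a (\<sigma> s v))\<^sup>2)
      = (\<Sum>s\<in>S. 2 * A - 2 * (\<Sum>v\<in>W. a v * a (\<sigma> s v)))"
    using invariant
    by (intro sum.cong) (simp_all add: A_def power2_diff sum.distrib sum_subtractf sum_distrib_left mult.assoc)
  also have "\<dots> = 2 * k * A - 2 * k * C"
  proof -
    have "k * P v = (\<Sum>s\<in>S. a (\<sigma> s v))" for v
      using k by (simp add: P_def)
    then have "k * C = (\<Sum>v\<in>W. \<Sum>s\<in>S. a v * a (\<sigma> s v))"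
      by (simp add: C_def sum_distrib_left mult.left_commute[of k])
    then show ?thesis
      by (simp add: sum_subtractf k_def sum_distrib_left sum.swap[of _ S W] mult.assoc)
  qed
  finally have dirichlet: "(\<Sum>s\<in>S. \<Sum>v\<in>W. (a v - a (\<sigma> s v))\<^sup>2) = 2 * k * A - 2 * k * C" .
  have "(lazy_average S \<sigma> a v)\<^sup>2 = (a v)\<^sup>2 / 4 + a v * P v / 2 + (P v)\<^sup>2 / 4" for v
    by (simp add: average power2_eq_square field_simps)
  then have expand: "(\<Sum>v\<in>W. (lazy_average S \<sigma> a v)\<^sup>2) = A / 4 + C / 2 + (\<Sum>v\<in>W. (P v)\<^sup>2) / 4"
    by (simp add: A_def C_def sum.distrib sum_divide_distrib[symmetric])
  have "(\<Sum>s\<in>S. \<Sum>v\<in>W. (a v - a (\<sigma> s v))\<^sup>2) / (4 * k) = (A - C) / 2"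
    using k by (simp add: dirichlet field_simps)
  moreover have "(\<Sum>v\<in>W. (lazy_average S \<sigma> a v)\<^sup>2) \<le> A - (A - C) / 2"
    unfolding expand using squares_P by (simp add: field_simps)
  ultimately show ?thesis
    unfolding A_def k_def by argo
qed

lemma Sum_any_squares_lazy_average_le:
  fixes a :: "'v \<Rightarrow> real" and \<sigma> :: "'s \<Rightarrow> 'v \<Rightarrow> 'v"
  assumes S: "finite S" "S \<noteq> {}" and bij: "\<And>s. s \<in> S \<Longrightarrow> bij (\<sigma> s)"
    and finite_support: "finite {v. a v \<noteq> 0}"
  shows "Sum_any (\<lambda>v. (lazy_average S \<sigma> a v)\<^sup>2)
    \<le> Sum_any (\<lambda>v. (a v)\<^sup>2) - (\<Sum>s\<in>S. Sum_any (\<lambda>v. (a v - a (\<sigma> s v))\<^sup>2)) / (4 * real (card S))"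
proof -
  define W where "W = {v. a v \<noteq> 0} \<union> (\<Union>s\<in>S. \<sigma> s -` {v. a v \<noteq> 0})"
  have "finite (\<sigma> s -` {v. a v \<noteq> 0})" if "s \<in> S" for s
    using finite_support bij_is_inj[OF bij[OF that]] by (rule finite_vimageI)
  then have "finite W"
    unfolding W_def using S(1) finite_support by (intro finite_UnI finite_UN_I)
  then have Sum_any_eq: "Sum_any f = sum f W"
    if "\<And>v. v \<notin> W \<Longrightarrow> f v = 0" for f :: "'v \<Rightarrow> real"
    using Sum_any.expand_superset that by (metis (mono_tags) mem_Collect_eq subsetI)
  have outside_W: "a v = 0" if "v \<notin> W" for v
    using that by (auto simp: W_def)
  have shift_outside_W: "a (\<sigma> s v) = 0" if "v \<notin> W" "s \<in> S" for v s
    using that by (auto simp: W_def)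
  have "sum (\<lambda>v. (a (\<sigma> s v))\<^sup>2) W = sum (\<lambda>v. (a v)\<^sup>2) W" if "s \<in> S" for s
  proof -
    have "Sum_any (\<lambda>v. (a (\<sigma> s v))\<^sup>2) = Sum_any (\<lambda>v. (a v)\<^sup>2)"
      by (rule Sum_any.reindex_cong[symmetric, OF bij[OF that]]) auto
    moreover have "Sum_any (\<lambda>v. (a (\<sigma> s v))\<^sup>2) = sum (\<lambda>v. (a (\<sigma> s v))\<^sup>2) W"
      by (rule Sum_any_eq) (use outside_W shift_outside_W that in auto)
    moreover have "Sum_any (\<lambda>v. (a v)\<^sup>2) = sum (\<lambda>v. (a v)\<^sup>2) W"
      by (rule Sum_any_eq) (use outside_W shift_outside_W that in auto)
    ultimately show ?thesis by simp
  qed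
  then have "(\<Sum>v\<in>W. (lazy_average S \<sigma> a v)\<^sup>2)
    \<le> (\<Sum>v\<in>W. (a v)\<^sup>2) - (\<Sum>s\<in>S. \<Sum>v\<in>W. (a v - a (\<sigma> s v))\<^sup>2) / (4 * real (card S))"
    by (rule sum_squares_lazy_average_le[OF S])
  moreover have "Sum_any (\<lambda>v. (lazy_average S \<sigma> a v)\<^sup>2) = (\<Sum>v\<in>W. (lazy_average S \<sigma> a v)\<^sup>2)"
    by (rule Sum_any_eq) (use outside_W shift_outside_W in \<open>auto simp: lazy_average_def\<close>)
  moreover have "Sum_any (\<lambda>v. (a v)\<^sup>2) = (\<Sum>v\<in>W. (a v)\<^sup>2)"
    by (rule Sum_any_eq) (use outside_W in auto)
  moreover have "(\<Sum>s\<in>S. Sum_any (\<lambda>v. (a v - a (\<sigma> s v))\<^sup>2))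
      = (\<Sum>s\<in>S. \<Sum>v\<in>W. (a v - a (\<sigma> s v))\<^sup>2)"
    by (intro sum.cong refl Sum_any_eq) (use outside_W shift_outside_W in auto)
  ultimately show ?thesis
    by (simp only:)
qed

lemma le_Sum_any:
  fixes f :: "'v \<Rightarrow> real"
  assumes "\<And>v. f v \<ge> 0" and "finite {v. f v \<noteq> 0}"
  shows "f v \<le> Sum_any f"
  unfolding Sum_any.expand_set using assms
  by (cases "f v = 0") (auto intro: sum_nonneg member_le_sum)

lemma summable_dirichlet_lazy_average_iterates:
  fixes q :: "nat \<Rightarrow> 'v \<Rightarrow> real" and \<sigma> :: "'s \<Rightarrow> 'v \<Rightarrow> 'v"
  assumes S: "finite S" "S \<noteq> {}" and bij: "\<And>s. s \<in> S \<Longrightarrow> bij (\<sigma> s)"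
    and finite_support: "\<And>n. finite {v. q n v \<noteq> 0}"
    and iterate: "\<And>n. q (Suc n) = lazy_average S \<sigma> (q n)"
  shows "summable (\<lambda>n. \<Sum>s\<in>S. Sum_any (\<lambda>v. (q n v - q n (\<sigma> s v))\<^sup>2))"
    (is "summable ?dirichlet")
proof -
  define energy where "energy n = Sum_any (\<lambda>v. (q n v)\<^sup>2)" for n
  have card_S: "real (card S) > 0"
    using S by (simp add: card_gt_0_iff)
  have dirichlet_nonneg: "?dirichlet n \<ge> 0" for n
    unfolding Sum_any.expand_set by (intro sum_nonneg) simp
  have energy_step: "energy (Suc n) \<le> energy n - ?dirichlet n / (4 * real (card S))" for n
    using Sum_any_squares_lazy_average_le[OF S bij finite_support[of n]]
    by (simp add: energy_def iterate)
  have "decseq energy"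
  proof (rule decseq_SucI)
    fix n
    have "?dirichlet n / (4 * real (card S)) \<ge> 0"
      using dirichlet_nonneg card_S by simp
    then show "energy (Suc n) \<le> energy n"
      using energy_step[of n] by linarith
  qed
  moreover have "\<forall>n. 0 \<le> energy n"
    unfolding energy_def Sum_any.expand_set by (intro allI sum_nonneg) simp
  ultimately obtain L where "energy \<longlonglongrightarrow> L"
    by (rule decseq_convergent)
  then have "summable (\<lambda>n. 4 * real (card S) * (energy n - energy (Suc n)))"
    by (intro summable_mult telescope_summable')
  moreover have "norm (?dirichlet n) \<le> 4 * real (card S) * (energy n - energy (Suc n))" for n
    using energy_step[of n] dirichlet_nonneg[of n] card_S by (simp add: field_simps)
  ultimately show ?thesis
    by (rule summable_comparison_test')
qed

lemma lazy_average_iterates_increment_tendsto_zero: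
  fixes q :: "nat \<Rightarrow> 'v \<Rightarrow> real" and \<sigma> :: "'s \<Rightarrow> 'v \<Rightarrow> 'v"
  assumes S: "finite S" "S \<noteq> {}" and bij: "\<And>s. s \<in> S \<Longrightarrow> bij (\<sigma> s)"
    and finite_support: "\<And>n. finite {v. q n v \<noteq> 0}"
    and iterate: "\<And>n. q (Suc n) = lazy_average S \<sigma> (q n)"
    and "s \<in> S"
  shows "(\<lambda>n. q n v - q n (\<sigma> s v)) \<longlonglongrightarrow> 0"
proof -
  define dirichlet where "dirichlet n = (\<Sum>s\<in>S. Sum_any (\<lambda>v. (q n v - q n (\<sigma> s v))\<^sup>2))" for n
  have dirichlet_lim: "dirichlet \<longlonglongrightarrow> 0"
    unfolding dirichlet_def
    by (rule summable_LIMSEQ_zero[OF summable_dirichlet_lazy_average_iterates[where q = q and \<sigma> = \<sigma>, OF assms(1-5)]])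
  have square_le: "(q n v - q n (\<sigma> s v))\<^sup>2 \<le> dirichlet n" for n
  proof -
    have "finite {v. (q n v - q n (\<sigma> s v))\<^sup>2 \<noteq> 0}"
      using finite_support[of n] finite_vimageI[OF finite_support[of n] bij_is_inj[OF bij[OF \<open>s \<in> S\<close>]]]
      by (rule finite_subset[rotated, OF finite_UnI]) auto
    then have "(q n v - q n (\<sigma> s v))\<^sup>2 \<le> Sum_any (\<lambda>v. (q n v - q n (\<sigma> s v))\<^sup>2)"
      by (intro le_Sum_any) auto
    also have "\<dots> \<le> dirichlet n"
      unfolding dirichlet_def using S \<open>s \<in> S\<close>
      by (intro member_le_sum) (auto simp: Sum_any.expand_set intro: sum_nonneg)
    finally show ?thesis .
  qed
  have "(\<lambda>n. (q n v - q n (\<sigma> s v))\<^sup>2) \<longlonglongrightarrow> 0"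
    by (rule Lim_null_comparison[OF _ dirichlet_lim]) (simp add: square_le)
  then have "(\<lambda>n. sqrt ((q n v - q n (\<sigma> s v))\<^sup>2)) \<longlonglongrightarrow> sqrt 0"
    by (rule tendsto_real_sqrt)
  then show ?thesis
    by (simp add: tendsto_rabs_zero_iff)
qed

lemma tendsto_zero_if_multiples_bounded:
  fixes x :: "nat \<Rightarrow> real"
  assumes nonneg: "\<And>n. 0 \<le> x n"
    and bounded: "\<And>N. \<exists>y. y \<longlonglongrightarrow> 0 \<and> (\<forall>n. real N * x n \<le> 1 + y n)"
  shows "x \<longlonglongrightarrow> 0"
proof (rule order_tendstoI)
  fix a :: real
  assume "a < 0"
  then show "eventually (\<lambda>n. a < x n) sequentially"
    using nonneg by (auto intro: always_eventually less_le_trans)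
next
  fix a :: real
  assume "0 < a"
  obtain N :: nat where N: "2 / a < real N"
    using reals_Archimedean2 by blast
  moreover have "0 < 2 / a"
    using \<open>0 < a\<close> by simp
  ultimately have "real N > 0"
    by linarith
  obtain y where "y \<longlonglongrightarrow> 0" and y: "\<And>n. real N * x n \<le> 1 + y n"
    using bounded by blast
  then have "eventually (\<lambda>n. y n < 1) sequentially"
    by (intro order_tendstoD) auto
  then show "eventually (\<lambda>n. x n < a) sequentially"
  proof eventually_elim
    case (elim n)
    with y[of n] have "real N * x n < 2"
      by linarith
    also have "2 < real N * a"
      using N \<open>0 < a\<close> by (simp add: field_simps)
    finally show "x n < a"
      using \<open>real N > 0\<close> by simp
  qed
qed

lemma ereal_add_suminf_le:
  fixes c :: "nat \<Rightarrow> real"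
  assumes "\<And>k. 0 \<le> c k" and "\<And>K. ereal (a + (\<Sum>k<K. c k)) \<le> L"
  shows "ereal a + suminf (\<lambda>k. ereal (c k)) \<le> L"
proof -
  have "ereal a + suminf (\<lambda>k. ereal (c k)) = ereal a + (SUP K. \<Sum>k<K. ereal (c k))"
    using assms(1) by (simp add: suminf_ereal_eq_SUP)
  also have "\<dots> = (SUP K. ereal a + (\<Sum>k<K. ereal (c k)))"
    by (rule SUP_ereal_add_right[symmetric]) auto
  also have "\<dots> \<le> L"
    using assms(2) by (intro SUP_least) simp
  finally show ?thesis .
qed

context group
begin

lemma r_coset_in_rcosets:
  assumes "subgroup H G" "C \<in> rcosets H" "g \<in> carrier G"
  shows "C #> g \<in> rcosets H"
proof -
  have H: "H \<subseteq> carrier G"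
    using assms(1) by (rule subgroup.subset)
  obtain a where a: "a \<in> carrier G" "C = H #> a"
    using assms(2) by (auto simp: RCOSETS_def)
  then have "C #> g = H #> (a \<otimes> g)"
    using H assms(3) by (simp add: coset_mult_assoc)
  then show ?thesis
    using H a assms(3) by (auto intro: rcosetsI)
qed

lemma mult_mem_iff_mem_r_coset_inv:
  assumes "A \<subseteq> carrier G" "x \<in> carrier G" "s \<in> carrier G"
  shows "x \<otimes> s \<in> A \<longleftrightarrow> x \<in> A #> inv s"
proof
  assume "x \<otimes> s \<in> A"
  moreover have "x = (x \<otimes> s) \<otimes> inv s"
    using assms(2,3) by (simp add: m_assoc)
  ultimately show "x \<in> A #> inv s"
    unfolding r_coset_def by blast
next
  assume "x \<in> A #> inv s"
  then obtain a where "a \<in> A" "x = a \<otimes> inv s"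
    unfolding r_coset_def by blast
  then show "x \<otimes> s \<in> A"
    using assms by (auto simp: m_assoc)
qed

lemma rcoset_increment_tendsto_zero_generate:
  fixes f :: "nat \<Rightarrow> 'a set \<Rightarrow> real"
  assumes H: "subgroup H G" and A: "A \<subseteq> carrier G"
    and generators: "\<And>C s. C \<in> rcosets H \<Longrightarrow> s \<in> A \<Longrightarrow> (\<lambda>n. f n C - f n (C #> s)) \<longlonglongrightarrow> 0"
    and "g \<in> generate G A" and "C \<in> rcosets H"
  shows "(\<lambda>n. f n C - f n (C #> g)) \<longlonglongrightarrow> 0"
  using \<open>g \<in> generate G A\<close> \<open>C \<in> rcosets H\<close>
proof (induction arbitrary: C)
  case one
  then show ?case
    using subgroup.rcosets_carrier[OF H is_group] by simp
next
  case (incl s)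
  then show ?case
    by (rule generators[rotated])
next
  case (inv s)
  have s: "s \<in> carrier G"
    using A inv.hyps by blast
  have "C #> inv s \<in> rcosets H" and "(C #> inv s) #> s = C"
    using r_coset_in_rcosets[OF H inv.prems] s subgroup.rcosets_carrier[OF H is_group inv.prems]
    by (simp_all add: coset_mult_assoc)
  then have "(\<lambda>n. - (f n (C #> inv s) - f n C)) \<longlonglongrightarrow> - 0"
    using generators inv.hyps by (metis tendsto_minus)
  then show ?case
    by simp
next
  case (eng g h)
  have gh: "g \<in> carrier G" "h \<in> carrier G"
    using eng.hyps generate_in_carrier[OF A] by auto
  have "C #> g \<in> rcosets H" and "(C #> g) #> h = C #> (g \<otimes> h)"
    using r_coset_in_rcosets[OF H eng.prems] gh subgroup.rcosets_carrier[OF H is_group eng.prems]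
    by (simp_all add: coset_mult_assoc)
  then have "(\<lambda>n. (f n C - f n (C #> g)) + (f n (C #> g) - f n (C #> (g \<otimes> h)))) \<longlonglongrightarrow> 0 + 0"
    using eng.IH eng.prems by (metis tendsto_add)
  then show ?case
    by simp
qed

lemma sum_measure_rcosets:
  assumes "subgroup H G" "F \<subseteq> rcosets H" "finite F"
  shows "(\<Sum>C\<in>F. measure (measure_pmf M) C) = measure (measure_pmf M) (\<Union>F)"
  using assms rcos_disjoint[OF assms(1)]
  by (intro measure_Union'[symmetric]) (auto simp: pairwise_subset measure_pmf.fmeasurable_eq_sets)

lemma Lambda_subgroup: "subgroup (Lambda G k) G"
proof -
  define \<N> where "\<N> = {N. fin_normal G N \<and> grp_index G N \<le> k}"
  have subgroups: "subgroup N G" if "N \<in> \<N>" for N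
    using that by (auto simp: \<N>_def fin_normal_def normal_imp_subgroup)
  show ?thesis
  proof (cases "\<N> = {}")
    case True
    then show ?thesis
      by (simp add: Lambda_def \<N>_def[symmetric] subgroup_self)
  next
    case False
    then have "Lambda G k = \<Inter>\<N>"
      using subgroups unfolding Lambda_def \<N>_def[symmetric] by (auto dest: subgroup.mem_carrier)
    then show ?thesis
      using subgroups_Inter[OF subgroups False] by simp
  qed
qed

lemma grp_index_carrier: "grp_index G (carrier G) = 1"
proof -
  have "rcosets (carrier G) = {carrier G}"
    using subgroup.rcos_const[OF subgroup_self is_group] by (auto simp: RCOSETS_def)
  then show ?thesis
    by (simp add: grp_index_def)
qed

lemma Lambda_eq_carrier:
  assumes "k \<le> 1"
  shows "Lambda G k = carrier G"
proof -
  have "carrier G \<subseteq> N" if N: "fin_normal G N" "grp_index G N \<le> k" for N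
  proof
    fix g assume g: "g \<in> carrier G"
    have H: "subgroup N G"
      using N(1) by (simp add: fin_normal_def normal_imp_subgroup)
    have "card (rcosets N) \<le> 1" "finite (rcosets N)"
      using N assms by (simp_all add: grp_index_def fin_normal_def)
    moreover have "N #> g \<in> rcosets N" "N \<in> rcosets N"
      using g subgroup.subset[OF H] subgroup.subgroup_in_rcosets[OF H is_group] by (auto intro: rcosetsI)
    ultimately have "N #> g = N"
      by (auto simp: card_le_Suc0_iff_eq)
    then show "g \<in> N"
      using coset_join1[OF _ g H] by simp
  qed
  then show ?thesis
    unfolding Lambda_def by auto
qed

lemma less_D_G_if_mem_Lambda:
  assumes "residually_finite G" "x \<in> carrier G" "x \<noteq> \<one>" "x \<in> Lambda G k"
  shows "k < D_G G x"
proof -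
  define I where "I = {grp_index G N | N. fin_normal G N \<and> x \<notin> N}"
  have "I \<noteq> {}"
    using assms(1-3) by (auto simp: residually_finite_def I_def)
  then have "Inf I \<in> I"
    by (rule Inf_nat_def1)
  moreover have "k < i" if "i \<in> I" for i
    using that assms(4) by (force simp: I_def Lambda_def)
  ultimately show ?thesis
    using assms(3) by (simp add: D_G_def I_def)
qed

lemma sum_indicator_Lambda_le_D_G:
  assumes "residually_finite G" "x \<in> carrier G"
  shows "(\<Sum>k<K. indicator (Lambda G k) x - indicator {\<one>} x) \<le> real (D_G G x)"
proof (cases "x = \<one>")
  case True
  then show ?thesis
    using subgroup.one_closed[OF Lambda_subgroup] by simp
next
  case False
  then have "(\<Sum>k<K. indicator (Lambda G k) x - indicator {\<one>} x :: real)
      = real (card ({..<K} \<inter> {k. x \<in> Lambda G k}))"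
    by (simp add: indicator_def)
  also have "\<dots> \<le> real (card {..<D_G G x})"
    using less_D_G_if_mem_Lambda[OF assms False] by (intro of_nat_mono card_mono) auto
  finally show ?thesis
    by simp
qed

end

locale lazy_random_walk = group G for G (structure) + fixes S :: "'a set"
  assumes finite_S: "finite S" and S_nonempty: "S \<noteq> {}" and S_subset: "S \<subseteq> carrier G"
    and inv_S: "s \<in> S \<Longrightarrow> inv s \<in> S" and generate_S: "generate G S = carrier G"
begin

abbreviation walk :: "nat \<Rightarrow> 'a pmf" where
  "walk n \<equiv> lazy_walk G S n"

lemma set_pmf_lazy_step: "x \<in> carrier G \<Longrightarrow> set_pmf (lazy_step G S x) \<subseteq> carrier G"
  using S_subset finite_S S_nonempty by (auto simp: lazy_step_def set_pmf_of_set[OF S_nonempty finite_S] split: if_splits intro!: m_closed)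

lemma finite_set_pmf_lazy_step: "finite (set_pmf (lazy_step G S x))"
  using finite_S S_nonempty by (auto simp: lazy_step_def)

lemma set_pmf_walk: "set_pmf (walk n) \<subseteq> carrier G"
  by (induction n) (use set_pmf_lazy_step in auto)

lemma finite_set_pmf_walk: "finite (set_pmf (walk n))"
  by (induction n) (simp_all add: finite_set_pmf_lazy_step)

lemma expectation_lazy_step:
  fixes h :: "'a \<Rightarrow> real"
  shows "measure_pmf.expectation (lazy_step G S x) h
    = h x / 2 + (\<Sum>s\<in>S. h (x \<otimes> s)) / (2 * real (card S))"
proof -
  have "measure_pmf.expectation (lazy_step G S x) h
    = (\<Sum>b\<in>UNIV. pmf (bernoulli_pmf (1/2)) b *\<^sub>R measure_pmf.expectation
        (if b then return_pmf x else map_pmf (\<lambda>s. x \<otimes> s) (pmf_of_set S)) h)"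
    unfolding lazy_step_def
    by (rule pmf_expectation_bind) (use finite_S S_nonempty in auto)
  then show ?thesis
    using finite_S S_nonempty by (simp add: UNIV_bool integral_pmf_of_set)
qed

lemma expectation_walk_Suc:
  fixes h :: "'a \<Rightarrow> real"
  shows "measure_pmf.expectation (walk (Suc n)) h
    = measure_pmf.expectation (walk n) h / 2
      + (\<Sum>s\<in>S. measure_pmf.expectation (walk n) (\<lambda>x. h (x \<otimes> s))) / (2 * real (card S))"
proof -
  let ?A = "set_pmf (walk n)"
  have expectation_walk: "measure_pmf.expectation (walk n) f = (\<Sum>a\<in>?A. pmf (walk n) a * f a)"
    for f :: "'a \<Rightarrow> real"
    by (subst integral_measure_pmf[of ?A]) (auto simp: finite_set_pmf_walk)
  have "measure_pmf.expectation (walk (Suc n)) h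
    = (\<Sum>a\<in>?A. pmf (walk n) a *\<^sub>R measure_pmf.expectation (lazy_step G S a) h)"
    unfolding lazy_walk.simps
    by (rule pmf_expectation_bind) (auto simp: finite_set_pmf_walk finite_set_pmf_lazy_step)
  then show ?thesis
    by (simp add: expectation_walk expectation_lazy_step sum.distrib sum_divide_distrib[symmetric]
        sum_distrib_left sum.swap[of _ S ?A] field_simps)
qed

lemma measure_walk_Suc:
  assumes "A \<subseteq> carrier G"
  shows "measure (walk (Suc n)) A
    = measure (walk n) A / 2 + (\<Sum>s\<in>S. measure (walk n) (A #> s)) / (2 * real (card S))"
proof -
  have "measure_pmf.expectation (walk n) (\<lambda>x. indicator A (x \<otimes> s))
      = measure (walk n) (A #> inv s)" if "s \<in> S" for s
  proof -
    have "indicator A (x \<otimes> s) = (indicator (A #> inv s) x :: real)" if "x \<in> set_pmf (walk n)" for x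
      using mult_mem_iff_mem_r_coset_inv[OF assms, of x s] set_pmf_walk S_subset \<open>s \<in> S\<close> that
      by (auto simp: indicator_def)
    then have "measure_pmf.expectation (walk n) (\<lambda>x. indicator A (x \<otimes> s))
        = measure_pmf.expectation (walk n) (indicator (A #> inv s) :: 'a \<Rightarrow> real)"
      by (intro integral_cong_AE) (auto intro!: AE_pmfI)
    then show ?thesis
      by simp
  qed
  then have "measure (walk (Suc n)) A
      = measure (walk n) A / 2 + (\<Sum>s\<in>S. measure (walk n) (A #> inv s)) / (2 * real (card S))"
    using expectation_walk_Suc[of n "indicator A"] by simp
  also have "(\<Sum>s\<in>S. measure (walk n) (A #> inv s)) = (\<Sum>s\<in>S. measure (walk n) (A #> s))"
    by (rule sum.reindex_bij_witness[where i = "\<lambda>s. inv s" and j = "\<lambda>s. inv s"]) (use inv_S S_subset in auto)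
  finally show ?thesis .
qed

lemma measure_rcoset_increment_tendsto_zero:
  assumes H: "subgroup H G" and "C \<in> rcosets H" "s \<in> S"
  shows "(\<lambda>n. measure (walk n) C - measure (walk n) (C #> s)) \<longlonglongrightarrow> 0"
proof -
  \<comment> \<open>Extended by the identity resp. by 0 off \<open>rcosets H\<close>, so that each \<open>\<sigma> s\<close> is a bijection
    of the whole type and q has finite support.\<close>
  define \<sigma> where "\<sigma> s C = (if C \<in> rcosets H then C #> s else C)" for s C
  define q where "q n C = (if C \<in> rcosets H then measure (walk n) C else 0)" for n C
  have rcosets_carrier: "C \<subseteq> carrier G" if "C \<in> rcosets H" for C
    using subgroup.rcosets_carrier[OF H is_group that] .
  have \<sigma>_inverse: "\<sigma> (inv s) (\<sigma> s C) = C" if "s \<in> carrier G" for s C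
    using that r_coset_in_rcosets[OF H] rcosets_carrier by (simp add: \<sigma>_def coset_mult_assoc)
  have "bij (\<sigma> s)" if "s \<in> S" for s
  proof (rule o_bij)
    show "\<sigma> (inv s) \<circ> \<sigma> s = id" "\<sigma> s \<circ> \<sigma> (inv s) = id"
      using \<sigma>_inverse[of s] \<sigma>_inverse[of "inv s"] that S_subset by (auto simp: fun_eq_iff)
  qed
  moreover have "finite {C. q n C \<noteq> 0}" for n
  proof (rule finite_subset)
    show "{C. q n C \<noteq> 0} \<subseteq> (\<lambda>x. H #> x) ` set_pmf (walk n)"
    proof
      fix C assume "C \<in> {C. q n C \<noteq> 0}"
      then obtain x where "C \<in> rcosets H" "x \<in> C" "x \<in> set_pmf (walk n)"
        by (auto simp: q_def measure_pmf_zero_iff split: if_splits)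
      then show "C \<in> (\<lambda>x. H #> x) ` set_pmf (walk n)"
        using repr_independence[OF _ _ H] by (auto simp: RCOSETS_def)
    qed
  qed (simp add: finite_set_pmf_walk)
  moreover have "q (Suc n) = lazy_average S \<sigma> (q n)" for n
  proof
    fix C
    show "q (Suc n) C = lazy_average S \<sigma> (q n) C"
    proof (cases "C \<in> rcosets H")
      case True
      then have "q n (\<sigma> s C) = measure (walk n) (C #> s)" if "s \<in> S" for s
        using r_coset_in_rcosets[OF H] that S_subset by (auto simp: q_def \<sigma>_def)
      then show ?thesis
        using True measure_walk_Suc[OF rcosets_carrier[OF True]] by (simp add: q_def lazy_average_def)
    qed (simp add: q_def \<sigma>_def lazy_average_def)
  qed
  ultimately have "(\<lambda>n. q n C - q n (\<sigma> s C)) \<longlonglongrightarrow> 0"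
    by (rule lazy_average_iterates_increment_tendsto_zero[OF finite_S S_nonempty _ _ _ \<open>s \<in> S\<close>])
  then show ?thesis
    using assms r_coset_in_rcosets[OF H] S_subset by (auto simp: q_def \<sigma>_def)
qed

lemma measure_rcoset_difference_tendsto_zero:
  assumes H: "subgroup H G" and "C \<in> rcosets H"
  shows "(\<lambda>n. measure (walk n) H - measure (walk n) C) \<longlonglongrightarrow> 0"
proof -
  obtain a where a: "a \<in> carrier G" "C = H #> a"
    using assms(2) by (auto simp: RCOSETS_def)
  have "H \<in> rcosets H"
    using subgroup.subgroup_in_rcosets[OF H is_group] .
  with a show ?thesis
    using rcoset_increment_tendsto_zero_generate[OF H S_subset measure_rcoset_increment_tendsto_zero[OF H]]
    by (simp add: generate_S)
qed

lemma sum_measure_walk_rcosets: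
  assumes H: "subgroup H G" and "finite (rcosets H)"
  shows "(\<Sum>C\<in>rcosets H. measure (walk n) C) = 1"
proof -
  have "(\<Sum>C\<in>rcosets H. measure (walk n) C) = measure (walk n) (carrier G)"
    using sum_measure_rcosets[OF H subset_refl assms(2)] rcosets_part_G[OF H] by simp
  also have "\<dots> = 1"
    using set_pmf_walk by (subst measure_pmf.prob_eq_1) (auto intro!: AE_pmfI)
  finally show ?thesis .
qed

text \<open>For infinite index, \<open>card (rcosets H) = 0\<close> and the limit \<open>1 / 0\<close> is 0.\<close>

lemma measure_walk_subgroup_tendsto:
  assumes H: "subgroup H G"
  shows "(\<lambda>n. measure (walk n) H) \<longlonglongrightarrow> 1 / real (card (rcosets H))"
proof (cases "finite (rcosets H)")
  case True
  define m where "m = real (card (rcosets H))"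
  have "m > 0"
    using True subgroup.subgroup_in_rcosets[OF H is_group] by (auto simp: m_def card_gt_0_iff)
  have "(\<lambda>n. m * measure (walk n) H - 1) = (\<lambda>n. \<Sum>C\<in>rcosets H. measure (walk n) H - measure (walk n) C)"
    using sum_measure_walk_rcosets[OF H True] by (simp add: sum_subtractf m_def)
  also have "\<dots> \<longlonglongrightarrow> (\<Sum>C\<in>rcosets H. 0)"
    by (intro tendsto_sum measure_rcoset_difference_tendsto_zero[OF H])
  finally have "(\<lambda>n. (m * measure (walk n) H - 1 + 1) / m) \<longlonglongrightarrow> (0 + 1) / m"
    using \<open>m > 0\<close> by (intro tendsto_intros) auto
  then show ?thesis
    using \<open>m > 0\<close> by (simp add: m_def)
next
  case False
  have "(\<lambda>n. measure (walk n) H) \<longlonglongrightarrow> 0"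
  proof (rule tendsto_zero_if_multiples_bounded)
    fix N
    obtain F where F: "F \<subseteq> rcosets H" "finite F" "card F = N"
      using infinite_arbitrarily_large[OF False] by blast
    define y where "y n = (\<Sum>C\<in>F. measure (walk n) H - measure (walk n) C)" for n
    have "y \<longlonglongrightarrow> (\<Sum>C\<in>F. 0)"
      unfolding y_def using F(1) by (intro tendsto_sum measure_rcoset_difference_tendsto_zero[OF H]) auto
    moreover have "real N * measure (walk n) H \<le> 1 + y n" for n
    proof -
      have "(\<Sum>C\<in>F. measure (walk n) C) \<le> 1"
        using sum_measure_rcosets[OF H F(1,2)] by simp
      then show ?thesis
        using F(3) by (simp add: y_def sum_subtractf)
    qed
    ultimately show "\<exists>y. y \<longlonglongrightarrow> 0 \<and> (\<forall>n. real N * measure (walk n) H \<le> 1 + y n)"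
      by auto
  qed simp
  then show ?thesis
    using False by simp
qed

lemma sum_measure_Lambda_le_expectation_D_G:
  assumes "residually_finite G"
  shows "(\<Sum>k<K. measure (walk n) (Lambda G k) - measure (walk n) {\<one>})
    \<le> measure_pmf.expectation (walk n) (\<lambda>x. real (D_G G x))"
proof -
  have integrable: "integrable (walk n) f" for f :: "'a \<Rightarrow> real"
    by (rule integrable_measure_pmf_finite[OF finite_set_pmf_walk])
  have "(\<Sum>k<K. measure (walk n) (Lambda G k) - measure (walk n) {\<one>})
      = measure_pmf.expectation (walk n) (\<lambda>x. \<Sum>k<K. indicator (Lambda G k) x - indicator {\<one>} x)"
    by (subst Bochner_Integration.integral_sum) (auto simp: integrable)
  also have "\<dots> \<le> measure_pmf.expectation (walk n) (\<lambda>x. real (D_G G x))"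
    using set_pmf_walk sum_indicator_Lambda_le_D_G[OF assms]
    by (intro integral_mono_AE) (auto intro!: AE_pmfI integrable)
  finally show ?thesis .
qed

lemma liminf_expectation_D_G_ge:
  assumes "residually_finite G" "infinite (carrier G)"
  shows "ereal (\<Sum>k<K. 1 / real (grp_index G (Lambda G k)))
    \<le> liminf (\<lambda>n. ereal (measure_pmf.expectation (walk n) (\<lambda>x. real (D_G G x))))"
proof -
  have "rcosets {\<one>} = (\<lambda>x. {x}) ` carrier G"
    by (auto simp: RCOSETS_def r_coset_def)
  then have "infinite (rcosets {\<one>})"
    using assms(2) by (auto dest: finite_imageD)
  then have "(\<lambda>n. measure (walk n) {\<one>}) \<longlonglongrightarrow> 0"
    using measure_walk_subgroup_tendsto[OF triv_subgroup] by simp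
  then have "(\<lambda>n. \<Sum>k<K. measure (walk n) (Lambda G k) - measure (walk n) {\<one>})
      \<longlonglongrightarrow> (\<Sum>k<K. 1 / real (grp_index G (Lambda G k)) - 0)"
    unfolding grp_index_def
    by (intro tendsto_sum tendsto_diff measure_walk_subgroup_tendsto[OF Lambda_subgroup])
  then have "liminf (\<lambda>n. ereal (\<Sum>k<K. measure (walk n) (Lambda G k) - measure (walk n) {\<one>}))
      = ereal (\<Sum>k<K. 1 / real (grp_index G (Lambda G k)))"
    by (intro lim_imp_Liminf) auto
  moreover have "liminf (\<lambda>n. ereal (\<Sum>k<K. measure (walk n) (Lambda G k) - measure (walk n) {\<one>}))
      \<le> liminf (\<lambda>n. ereal (measure_pmf.expectation (walk n) (\<lambda>x. real (D_G G x))))"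
    using sum_measure_Lambda_le_expectation_D_G[OF assms(1)]
    by (intro Liminf_mono always_eventually) simp
  ultimately show ?thesis
    by simp
qed

end

theorem proposition4p1:
  fixes G :: "('a, 'b) monoid_scheme" and S :: "'a set"
  assumes "group G"
    and "infinite (carrier G)"
    and "finitely_generated G"
    and "residually_finite G"
    and "finite S" and "S \<subseteq> carrier G"
    and "\<forall>s \<in> S. inv\<^bsub>G\<^esub> s \<in> S"
    and "generate G S = carrier G"
  shows "liminf (\<lambda>n. ereal (measure_pmf.expectation (lazy_walk G S n)
                                  (\<lambda>x. real (D_G G x))))
         \<ge> 2 + suminf (\<lambda>k. ereal (1 / real (grp_index G (Lambda G (k + 2)))))"
proof -
  have "S \<noteq> {}"
  proof
    assume "S = {}"
    then have "carrier G = {\<one>\<^bsub>G\<^esub>}"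
      using assms(8) group.generate_empty[OF assms(1)] by simp
    then show False
      using assms(2) by simp
  qed
  then interpret lazy_random_walk G S
    by (intro lazy_random_walk.intro lazy_random_walk_axioms.intro) (use assms in auto)
  have "ereal (2 + (\<Sum>k<K. 1 / real (grp_index G (Lambda G (k + 2)))))
    \<le> liminf (\<lambda>n. ereal (measure_pmf.expectation (walk n) (\<lambda>x. real (D_G G x))))" for K
  proof -
    have "(\<Sum>k<K + 2. 1 / real (grp_index G (Lambda G k)))
        = 2 + (\<Sum>k<K. 1 / real (grp_index G (Lambda G (k + 2))))"
      by (induction K) (simp_all add: numeral_2_eq_2 Lambda_eq_carrier grp_index_carrier)
    then show ?thesis
      using liminf_expectation_D_G_ge[OF assms(4,2), of "K + 2"] by simp
  qed
  then show ?thesis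
    using ereal_add_suminf_le[of _ 2] by simp
qed

end
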